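(* Let $1\le p,q<\infty$, $\theta>0$, and let $E$ be a bounded Lebesgue measurable subset of $\mathbb R$. Then: (a) $\chi_E\in l^{q),\theta}(L^p)$; (b) $\chi_E\in l^{q)',\theta}(L^p)$; (c) there exists a constant $c_E>0$ such that $\int_E|g(x)|\,dx\le c_E\|g\|_{p,q),\theta}$ for every measurable function $g\in l^{q),\theta}(L^p)$.
   Context: Index set $\mathbb Z$, $I_k=[k,k+1)$. The space $l^{q),\theta}(L^p)$ consists of complex-valued measurable $g$ on $\mathbb R$ with $g\chi_{I_k}\in L^p$ for all $k$ and $\|g\|_{p,q),\theta}:=\sup_{\varepsilon>0}\Big(\varepsilon^{\theta}\sum_{k\in\mathbb Z}\big(\int_{I_k}|g|^p\big)^{\frac{q(1+\varepsilon)}{p}}\Big)^{\frac{1}{q(1+\varepsilon)}}<\infty$. The small Lebesgue sequence space $l^{q)',\theta}$ consists of sequences $y=\{y_k\}_{k\in\mathbb Z}$ with $$\|y\|_{l^{q)',\theta}}:=\inf\Big\{\sum_{j\in\mathbb Z}\inf_{\varepsilon>0}\varepsilon^{\frac{-\theta}{q(1+\varepsilon)}}\Big(\sum_{k\in\mathbb Z}y_{k,j}^{(q(1+\varepsilon))'}\Big)^{\frac{1}{(q(1+\varepsilon))'}}\Big\}<\infty,$$ the outer infimum over all decompositions $|y_k|=\sum_{j\in\mathbb Z}y_{k,j}$ with $y_{k,j}\ge0$, and $(q(1+\varepsilon))'$ the conjugate exponent of $q(1+\varepsilon)$. The space $l^{q)',\theta}(L^p)$ consists of complex-valued measurable $f$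 on $\mathbb R$ with $f\chi_{I_k}\in L^p$ for all $k$ and $\|f\|_{p,q)',\theta}:=\big\|\{\|f\chi_{I_k}\|_{L^p}\}_{k\in\mathbb Z}\big\|_{l^{q)',\theta}}<\infty$. *)

theory Defs
  imports "HOL-Analysis.Analysis"
begin

definition unit_int :: "int \<Rightarrow> real set" where
  "unit_int k = {real_of_int k ..< real_of_int k + 1}"

text \<open>Real power of an extended nonnegative real (used only with positive exponents).\<close>
definition epowr :: "ennreal \<Rightarrow> real \<Rightarrow> ennreal" where
  "epowr x r = (if x = \<infinity> then \<infinity> else ennreal (enn2real x powr r))"

definition loc_Lp :: "real \<Rightarrow> (real \<Rightarrow> complex) \<Rightarrow> bool" where
  "loc_Lp p g \<longleftrightarrow> g \<in> borel_measurable lebesgue \<and>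
     (\<forall>k. (\<integral>\<^sup>+ x\<in>unit_int k. ennreal (norm (g x) powr p) \<partial>lebesgue) < \<infinity>)"

definition loc_int :: "real \<Rightarrow> (real \<Rightarrow> complex) \<Rightarrow> int \<Rightarrow> real" where
  "loc_int p g k = enn2real (\<integral>\<^sup>+ x\<in>unit_int k. ennreal (norm (g x) powr p) \<partial>lebesgue)"

definition grand_norm :: "real \<Rightarrow> real \<Rightarrow> real \<Rightarrow> (real \<Rightarrow> complex) \<Rightarrow> ennreal" where
  "grand_norm p q \<theta> g = (SUP \<epsilon>\<in>{0<..}.
      epowr (ennreal (\<epsilon> powr \<theta>) *
             (\<Sum>\<^sub>\<infinity> k::int. ennreal (loc_int p g k powr (q * (1 + \<epsilon>) / p))))
            (1 / (q * (1 + \<epsilon>))))"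

definition grand_space :: "real \<Rightarrow> real \<Rightarrow> real \<Rightarrow> (real \<Rightarrow> complex) set" where
  "grand_space p q \<theta> = {g. loc_Lp p g \<and> grand_norm p q \<theta> g < \<infinity>}"

definition conj_exp :: "real \<Rightarrow> real" where
  "conj_exp r = r / (r - 1)"

definition small_seq_norm :: "real \<Rightarrow> real \<Rightarrow> (int \<Rightarrow> real) \<Rightarrow> ennreal" where
  "small_seq_norm q \<theta> y = (INF d\<in>{d :: int \<Rightarrow> int \<Rightarrow> real.
        (\<forall>k j. 0 \<le> d k j) \<and> (\<forall>k. (\<Sum>\<^sub>\<infinity> j::int. ennreal (d k j)) = ennreal \<bar>y k\<bar>)}.
      \<Sum>\<^sub>\<infinity> j::int. (INF \<epsilon>\<in>{0<..}.
         ennreal (\<epsilon> powr (- \<theta> / (q * (1 + \<epsilon>)))) *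
         epowr (\<Sum>\<^sub>\<infinity> k::int. ennreal (d k j powr conj_exp (q * (1 + \<epsilon>))))
               (1 / conj_exp (q * (1 + \<epsilon>)))))"

definition small_norm :: "real \<Rightarrow> real \<Rightarrow> real \<Rightarrow> (real \<Rightarrow> complex) \<Rightarrow> ennreal" where
  "small_norm p q \<theta> f = small_seq_norm q \<theta> (\<lambda>k. loc_int p f k powr (1 / p))"

definition small_space :: "real \<Rightarrow> real \<Rightarrow> real \<Rightarrow> (real \<Rightarrow> complex) set" where
  "small_space p q \<theta> = {f. loc_Lp p f \<and> small_norm p q \<theta> f < \<infinity>}"

end

theory Submission
  imports Defs
begin

text \<open>A bounded set meets only finitely many of the unit intervals \<open>I\<^sub>k\<close>, so \<open>\<chi>\<^sub>E\<close> has
  finitely many nonzero local norms, all at most 1. Such a sequence has finite grand norm,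
  because \<open>(\<epsilon>\<^sup>\<theta> s)\<^bsup>1/(q(1+\<epsilon>))\<^esup>\<close> stays bounded by \<open>e\<^sup>\<theta>(1 + s)\<close>, and finite small norm, using the
  trivial decomposition with a single nonzero column. For (c), on each \<open>I\<^sub>k\<close> (a set of measure 1)
  the \<open>L\<^sup>1\<close> norm is at most twice the \<open>L\<^sup>p\<close> norm, and a single local \<open>L\<^sup>p\<close> norm is dominated by
  the grand norm (take \<open>\<epsilon> = 1\<close> and keep one term of the series); summing over the finitely
  many \<open>I\<^sub>k\<close> covering \<open>E\<close> gives \<open>c\<^sub>E = 2 #K + 1\<close>, the \<open>+ 1\<close> only keeping
  \<open>c\<^sub>E\<close> positive when \<open>E = {}\<close>.\<close>

lemma unit_int_iff: "x \<in> unit_int k \<longleftrightarrow> \<lfloor>x\<rfloor> = k"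
  unfolding unit_int_def by (auto simp: floor_eq_iff)

lemma unit_int_sets [measurable]: "unit_int k \<in> sets lebesgue"
  unfolding unit_int_def by simp

lemma emeasure_unit_int: "emeasure lebesgue (unit_int k) = 1"
  unfolding unit_int_def by simp

lemma loc_int_nonneg: "0 \<le> loc_int p g k"
  unfolding loc_int_def by simp

lemma finite_floor_image_bounded:
  fixes E :: "real set"
  assumes "bounded E"
  shows "finite (floor ` E)"
proof -
  obtain a where "\<forall>x\<in>E. \<bar>x\<bar> \<le> a"
    using assms bounded_real by auto
  then have "-a \<le> x \<and> x \<le> a" if "x \<in> E" for x
    using that by (auto simp: abs_le_iff)
  then have "floor ` E \<subseteq> {\<lfloor>-a\<rfloor>..\<lfloor>a\<rfloor>}"
    by (auto intro!: floor_mono)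
  then show ?thesis
    by (rule finite_subset) simp
qed

lemma infsum_eq_sum_if_zero_outside:
  fixes h :: "int \<Rightarrow> ennreal"
  assumes "finite K" "\<And>k. k \<notin> K \<Longrightarrow> h k = 0"
  shows "(\<Sum>\<^sub>\<infinity> k. h k) = sum h K"
proof -
  have "(\<Sum>\<^sub>\<infinity> k. h k) = infsum h K"
    by (rule infsum_cong_neutral) (use assms in auto)
  then show ?thesis
    using assms by simp
qed

lemma infsum_ennreal_ge_term:
  fixes h :: "int \<Rightarrow> ennreal"
  shows "h k \<le> (\<Sum>\<^sub>\<infinity> k. h k)"
proof -
  have "infsum h {k} \<le> infsum h UNIV"
    by (rule infsum_mono_neutral) (auto intro: nonneg_summable_on_complete)
  then show ?thesis
    by simp
qed

text \<open>Splitting at \<open>t = l\<close>: above \<open>l\<close> one has \<open>t = t\<^sup>p / t\<^bsup>p-1\<^esup> \<le> t\<^sup>p / l\<^bsup>p-1\<^esup>\<close>.\<close>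

lemma le_add_powr_div_powr:
  fixes l t p :: real
  assumes "0 < l" "0 \<le> t" "1 \<le> p"
  shows "t \<le> l + t powr p / l powr (p - 1)"
proof (cases "t \<le> l")
  case True
  then show ?thesis
    using assms by (smt (verit) divide_nonneg_nonneg powr_ge_zero)
next
  case False
  then have "0 < t"
    using assms by simp
  have "l powr (p - 1) \<le> t powr (p - 1)"
    using False assms by (intro powr_mono2) auto
  moreover have "t powr p = t * t powr (p - 1)"
    using \<open>0 < t\<close> by (simp add: powr_diff)
  moreover have "0 < l powr (p - 1)"
    using assms by simp
  ultimately have "t \<le> t powr p / l powr (p - 1)"
    using \<open>0 < t\<close> by (simp add: le_divide_eq mult_left_mono)
  then show ?thesis
    using assms by simp
qed

lemma nn_integral_unit_int_norm_le:
  assumes "loc_Lp p g" "1 \<le> p" "0 < l"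
  shows "(\<integral>\<^sup>+x\<in>unit_int k. ennreal (norm (g x)) \<partial>lebesgue)
      \<le> ennreal (l + loc_int p g k / l powr (p - 1))"
proof -
  define c where "c = 1 / l powr (p - 1)"
  let ?A = "\<integral>\<^sup>+x\<in>unit_int k. ennreal (norm (g x) powr p) \<partial>lebesgue"
  have g_meas: "g \<in> borel_measurable lebesgue" and "?A < \<infinity>"
    using assms(1) unfolding loc_Lp_def by auto
  then have A_eq: "?A = ennreal (loc_int p g k)"
    unfolding loc_int_def by (simp add: ennreal_enn2real_if less_top)
  have "0 \<le> c"
    unfolding c_def by simp
  have "(\<integral>\<^sup>+x\<in>unit_int k. ennreal (norm (g x)) \<partial>lebesgue)
     \<le> (\<integral>\<^sup>+x. ennreal l * indicator (unit_int k) x +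
            ennreal c * (ennreal (norm (g x) powr p) * indicator (unit_int k) x) \<partial>lebesgue)"
  proof (rule nn_integral_mono)
    fix x
    have "ennreal (norm (g x)) \<le> ennreal (l + c * norm (g x) powr p)"
      using le_add_powr_div_powr[OF assms(3) norm_ge_zero assms(2), of "g x"]
      unfolding c_def by (simp add: ennreal_leI)
    also have "\<dots> = ennreal l + ennreal c * ennreal (norm (g x) powr p)"
      using assms \<open>0 \<le> c\<close> by (simp add: ennreal_plus ennreal_mult)
    finally show "ennreal (norm (g x)) * indicator (unit_int k) x \<le> ennreal l * indicator (unit_int k) x +
            ennreal c * (ennreal (norm (g x) powr p) * indicator (unit_int k) x)"
      by (cases "x \<in> unit_int k") auto
  qed
  also have "\<dots> = ennreal l * emeasure lebesgue (unit_int k) + ennreal c * ?A"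
    using g_meas by (subst nn_integral_add) (auto simp: nn_integral_cmult)
  also have "\<dots> = ennreal (l + c * loc_int p g k)"
    using assms \<open>0 \<le> c\<close> A_eq by (simp add: emeasure_unit_int ennreal_plus ennreal_mult loc_int_nonneg)
  finally show ?thesis
    unfolding c_def by simp
qed

text \<open>The choice \<open>l = (\<integral>\<^sub>I\<^sub>k |g|\<^sup>p)\<^bsup>1/p\<^esup>\<close> balances the two terms of the previous bound.\<close>

lemma nn_integral_unit_int_norm_le_loc_int:
  assumes "loc_Lp p g" "1 \<le> p"
  shows "(\<integral>\<^sup>+x\<in>unit_int k. ennreal (norm (g x)) \<partial>lebesgue)
      \<le> 2 * ennreal (loc_int p g k powr (1 / p))"
proof (cases "loc_int p g k = 0")
  case True
  have "(\<integral>\<^sup>+x\<in>unit_int k. ennreal (norm (g x)) \<partial>lebesgue) \<le> 0"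
  proof (rule ennreal_le_epsilon)
    fix e :: real
    assume "0 < e"
    then show "(\<integral>\<^sup>+x\<in>unit_int k. ennreal (norm (g x)) \<partial>lebesgue) \<le> 0 + ennreal e"
      using nn_integral_unit_int_norm_le[OF assms \<open>0 < e\<close>, of k] True by simp
  qed
  then show ?thesis
    by simp
next
  case False
  define a where "a = loc_int p g k"
  define l where "l = a powr (1 / p)"
  have "0 < a"
    using False loc_int_nonneg[of p g k] unfolding a_def by linarith
  then have "0 < l"
    unfolding l_def by simp
  have "a / l powr (p - 1) = a powr 1 / a powr ((p - 1) / p)"
    unfolding l_def using \<open>0 < a\<close> by (simp add: powr_powr)
  also have "\<dots> = a powr (1 - (p - 1) / p)"
    by (simp add: powr_diff)
  also have "1 - (p - 1) / p = 1 / p"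
    using assms(2) by (simp add: field_simps)
  finally have "a / l powr (p - 1) = l"
    unfolding l_def .
  then have "ennreal (l + a / l powr (p - 1)) = 2 * ennreal l"
    using \<open>0 < l\<close> by (simp add: ennreal_mult)
  then show ?thesis
    using nn_integral_unit_int_norm_le[OF assms \<open>0 < l\<close>, of k] unfolding a_def l_def by simp
qed

lemma loc_int_powr_le_grand_norm:
  assumes "1 \<le> p" "1 \<le> q"
  shows "ennreal (loc_int p g k powr (1 / p)) \<le> grand_norm p q \<theta> g"
proof -
  let ?S = "\<Sum>\<^sub>\<infinity> k::int. ennreal (loc_int p g k powr (q * (1 + 1) / p))"
  have "ennreal (loc_int p g k powr (1 / p)) \<le> epowr ?S (1 / (q * 2))"
  proof (cases "?S = \<infinity>")
    case True
    then show ?thesis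
      by (simp add: epowr_def)
  next
    case False
    have "ennreal (loc_int p g k powr (q * (1 + 1) / p)) \<le> ?S"
      by (rule infsum_ennreal_ge_term)
    from enn2real_mono[OF this] have "loc_int p g k powr (q * 2 / p) \<le> enn2real ?S"
      using False by (simp add: top.not_eq_extremum)
    then have "(loc_int p g k powr (q * 2 / p)) powr (1 / (q * 2)) \<le> enn2real ?S powr (1 / (q * 2))"
      using assms by (intro powr_mono2) auto
    moreover have "loc_int p g k powr (1 / p) = (loc_int p g k powr (q * 2 / p)) powr (1 / (q * 2))"
      using assms loc_int_nonneg[of p g k] by (simp add: powr_powr)
    ultimately show ?thesis
      using False by (simp add: epowr_def ennreal_leI)
  qed
  also have "\<dots> \<le> grand_norm p q \<theta> g"
    unfolding grand_norm_def by (rule SUP_upper2[of 1]) simp_all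
  finally show ?thesis .
qed

lemma nn_integral_le_sum_unit_int:
  fixes h :: "real \<Rightarrow> ennreal"
  assumes "h \<in> borel_measurable lebesgue" "finite K" "\<And>x. x \<in> E \<Longrightarrow> \<lfloor>x\<rfloor> \<in> K"
  shows "(\<integral>\<^sup>+x\<in>E. h x \<partial>lebesgue) \<le> (\<Sum>k\<in>K. \<integral>\<^sup>+x\<in>unit_int k. h x \<partial>lebesgue)"
proof -
  have "(\<integral>\<^sup>+x\<in>E. h x \<partial>lebesgue) \<le> (\<integral>\<^sup>+x. (\<Sum>k\<in>K. h x * indicator (unit_int k) x) \<partial>lebesgue)"
  proof (rule nn_integral_mono)
    fix x
    show "h x * indicator E x \<le> (\<Sum>k\<in>K. h x * indicator (unit_int k) x)"
    proof (cases "x \<in> E")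
      case True
      have "h x * indicator (unit_int \<lfloor>x\<rfloor>) x \<le> (\<Sum>k\<in>K. h x * indicator (unit_int k) x)"
        by (rule member_le_sum) (use assms True in auto)
      then show ?thesis
        using True by (simp add: unit_int_iff)
    qed simp
  qed
  also have "\<dots> = (\<Sum>k\<in>K. \<integral>\<^sup>+x\<in>unit_int k. h x \<partial>lebesgue)"
    using assms(1) by (intro nn_integral_sum) auto
  finally show ?thesis .
qed

lemma nn_integral_le_grand_norm:
  assumes "1 \<le> p" "1 \<le> q" "g \<in> grand_space p q \<theta>"
    and "finite K" "\<And>x. x \<in> E \<Longrightarrow> \<lfloor>x\<rfloor> \<in> K"
  shows "(\<integral>\<^sup>+x\<in>E. ennreal (norm (g x)) \<partial>lebesgue) \<le> ennreal (2 * card K) * grand_norm p q \<theta> g"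
proof -
  have "loc_Lp p g"
    using assms(3) unfolding grand_space_def by simp
  then have "g \<in> borel_measurable lebesgue"
    unfolding loc_Lp_def by simp
  then have "(\<integral>\<^sup>+x\<in>E. ennreal (norm (g x)) \<partial>lebesgue)
      \<le> (\<Sum>k\<in>K. \<integral>\<^sup>+x\<in>unit_int k. ennreal (norm (g x)) \<partial>lebesgue)"
    using assms(4,5) by (intro nn_integral_le_sum_unit_int) auto
  also have "\<dots> \<le> (\<Sum>k\<in>K. 2 * grand_norm p q \<theta> g)"
  proof (rule sum_mono)
    fix k
    have "(\<integral>\<^sup>+x\<in>unit_int k. ennreal (norm (g x)) \<partial>lebesgue) \<le> 2 * ennreal (loc_int p g k powr (1 / p))"
      using \<open>loc_Lp p g\<close> assms(1) by (rule nn_integral_unit_int_norm_le_loc_int)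
    also have "\<dots> \<le> 2 * grand_norm p q \<theta> g"
      using loc_int_powr_le_grand_norm[OF assms(1,2)] by (intro mult_left_mono) auto
    finally show "(\<integral>\<^sup>+x\<in>unit_int k. ennreal (norm (g x)) \<partial>lebesgue) \<le> 2 * grand_norm p q \<theta> g" .
  qed
  also have "\<dots> = ennreal (2 * card K) * grand_norm p q \<theta> g"
    by (simp add: ennreal_mult ennreal_of_nat_eq_real_of_nat mult_ac)
  finally show ?thesis .
qed

lemma epsilon_powr_bound:
  fixes e q \<theta> s :: real
  assumes "0 < e" "1 \<le> q" "0 < \<theta>" "0 \<le> s"
  shows "(e powr \<theta> * s) powr (1 / (q * (1 + e))) \<le> exp \<theta> * (1 + s)"
proof -
  define r where "r = 1 / (q * (1 + e))"
  have "1 \<le> q * (1 + e)"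
    using assms by (smt (verit) mult_le_cancel_left1)
  then have "0 < r" "r \<le> 1"
    unfolding r_def by auto
  have "r * ln e \<le> 1"
  proof (cases "ln e \<le> 0")
    case True
    then show ?thesis
      using \<open>0 < r\<close> by (smt (verit) mult_nonneg_nonpos)
  next
    case False
    have "ln e \<le> q * (1 + e)"
      using ln_le_minus_one[OF \<open>0 < e\<close>] assms by (smt (verit) mult_le_cancel_right1)
    then show ?thesis
      unfolding r_def using \<open>1 \<le> q * (1 + e)\<close> by simp
  qed
  then have "\<theta> * r * ln e \<le> \<theta>"
    using assms by (metis mult.assoc mult.right_neutral mult_left_mono less_imp_le)
  then have "e powr (\<theta> * r) \<le> exp \<theta>"
    using assms by (simp add: powr_def)
  moreover have "s powr r \<le> 1 + s"
  proof (cases "s \<le> 1")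
    case True
    then show ?thesis
      using powr_le1[of r s] \<open>0 < r\<close> assms by simp
  next
    case False
    then have "s powr r \<le> s powr 1"
      using \<open>r \<le> 1\<close> by (intro powr_mono) auto
    then show ?thesis
      using False by simp
  qed
  moreover have "(e powr \<theta> * s) powr r = e powr (\<theta> * r) * s powr r"
    using assms by (simp add: powr_mult powr_powr)
  ultimately show ?thesis
    unfolding r_def[symmetric] by (smt (verit) exp_gt_zero mult_mono powr_ge_zero)
qed

lemma grand_norm_le_card_support:
  assumes "0 < p" "1 \<le> q" "0 < \<theta>" "finite K"
    and "\<And>k. k \<notin> K \<Longrightarrow> loc_int p f k = 0" "\<And>k. loc_int p f k \<le> 1"
  shows "grand_norm p q \<theta> f \<le> ennreal (exp \<theta> * (1 + card K))"
  unfolding grand_norm_def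
proof (rule SUP_least)
  fix e :: real
  assume "e \<in> {0<..}"
  define r where "r = q * (1 + e) / p"
  define s where "s = (\<Sum>k\<in>K. loc_int p f k powr r)"
  have "0 \<le> s"
    unfolding s_def by (simp add: sum_nonneg)
  have "0 \<le> r"
    unfolding r_def using assms \<open>e \<in> {0<..}\<close> by simp
  then have "s \<le> (\<Sum>k\<in>K. 1)"
    unfolding s_def using assms(6) loc_int_nonneg by (intro sum_mono powr_le1) auto
  have "(\<Sum>\<^sub>\<infinity> k::int. ennreal (loc_int p f k powr r)) = (\<Sum>k\<in>K. ennreal (loc_int p f k powr r))"
    using assms(4,5) by (intro infsum_eq_sum_if_zero_outside) auto
  also have "\<dots> = ennreal s"
    unfolding s_def by simp
  finally have "epowr (ennreal (e powr \<theta>) * (\<Sum>\<^sub>\<infinity> k::int. ennreal (loc_int p f k powr r))) (1 / (q * (1 + e)))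
      = ennreal ((e powr \<theta> * s) powr (1 / (q * (1 + e))))"
    unfolding epowr_def using \<open>0 \<le> s\<close> by (simp add: ennreal_mult[symmetric])
  also have "\<dots> \<le> ennreal (exp \<theta> * (1 + s))"
    using \<open>e \<in> {0<..}\<close> assms \<open>0 \<le> s\<close> by (intro ennreal_leI epsilon_powr_bound) auto
  also have "\<dots> \<le> ennreal (exp \<theta> * (1 + card K))"
    using \<open>s \<le> (\<Sum>k\<in>K. 1)\<close> by (intro ennreal_leI mult_left_mono) auto
  finally show "epowr (ennreal (e powr \<theta>) * (\<Sum>\<^sub>\<infinity> k::int. ennreal (loc_int p f k powr (q * (1 + e) / p))))
      (1 / (q * (1 + e))) \<le> ennreal (exp \<theta> * (1 + card K))"
    unfolding r_def .
qed

lemma small_norm_finite_support: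
  assumes "finite K" "\<And>k. k \<notin> K \<Longrightarrow> loc_int p f k = 0"
  shows "small_norm p q \<theta> f < \<infinity>"
proof -
  define y where "y k = loc_int p f k powr (1 / p)" for k
  define d where "d k j = (if j = 0 then \<bar>y k\<bar> else 0)" for k j :: int
  define c where "c = conj_exp (q * (1 + 1))"
  define H where "H j = ennreal (1 powr (- \<theta> / (q * (1 + 1)))) *
      epowr (\<Sum>\<^sub>\<infinity> k::int. ennreal (d k j powr c)) (1 / c)" for j
  have "(\<Sum>\<^sub>\<infinity> j::int. ennreal (d k j)) = ennreal \<bar>y k\<bar>" for k
    using infsum_eq_sum_if_zero_outside[of "{0}" "\<lambda>j. ennreal (d k j)"] by (simp add: d_def)
  then have "small_norm p q \<theta> f \<le> (\<Sum>\<^sub>\<infinity> j::int. H j)"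
    unfolding small_norm_def small_seq_norm_def y_def[symmetric]
    by (intro INF_lower2[of d] infsum_mono)
      (auto intro!: nonneg_summable_on_complete INF_lower2[of 1] simp: H_def d_def c_def)
  also have "(\<Sum>\<^sub>\<infinity> j::int. H j) = H 0"
    using infsum_eq_sum_if_zero_outside[of "{0}" H] by (simp add: H_def d_def epowr_def)
  also have "(\<Sum>\<^sub>\<infinity> k::int. ennreal (d k 0 powr c)) = (\<Sum>k\<in>K. ennreal (d k 0 powr c))"
    using assms by (intro infsum_eq_sum_if_zero_outside) (auto simp: d_def y_def)
  then have "H 0 < \<infinity>"
    unfolding H_def by (simp add: epowr_def ennreal_mult[symmetric])
  finally show ?thesis .
qed

lemma nn_integral_unit_int_indicator:
  assumes "E \<in> sets lebesgue"
  shows "(\<integral>\<^sup>+x\<in>unit_int k. ennreal (norm (indicator E x :: complex) powr p) \<partial>lebesgue)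
    = emeasure lebesgue (E \<inter> unit_int k)"
proof -
  have "(\<integral>\<^sup>+x\<in>unit_int k. ennreal (norm (indicator E x :: complex) powr p) \<partial>lebesgue)
      = (\<integral>\<^sup>+x. indicator (E \<inter> unit_int k) x \<partial>lebesgue)"
    by (rule nn_integral_cong) (auto simp: indicator_def)
  then show ?thesis
    using assms by simp
qed

lemma emeasure_inter_unit_int_le_1: "emeasure lebesgue (E \<inter> unit_int k) \<le> 1"
  using emeasure_mono[of "E \<inter> unit_int k" "unit_int k" lebesgue] by (simp add: emeasure_unit_int)

lemma loc_Lp_indicator:
  assumes "E \<in> sets lebesgue"
  shows "loc_Lp p (indicator E :: real \<Rightarrow> complex)"
proof -
  have "emeasure lebesgue (E \<inter> unit_int k) < \<infinity>" for k
    unfolding infinity_ennreal_def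
    using emeasure_inter_unit_int_le_1 ennreal_one_less_top by (rule order.strict_trans1)
  then show ?thesis
    unfolding loc_Lp_def nn_integral_unit_int_indicator[OF assms] using assms by simp
qed

lemma loc_int_indicator_le_1:
  assumes "E \<in> sets lebesgue"
  shows "loc_int p (indicator E :: real \<Rightarrow> complex) k \<le> 1"
  unfolding loc_int_def nn_integral_unit_int_indicator[OF assms]
  using enn2real_mono[OF emeasure_inter_unit_int_le_1] by simp

lemma loc_int_indicator_outside:
  assumes "E \<in> sets lebesgue" "k \<notin> floor ` E"
  shows "loc_int p (indicator E :: real \<Rightarrow> complex) k = 0"
proof -
  have "E \<inter> unit_int k = {}"
    using assms(2) by (auto simp: unit_int_iff)
  then show ?thesis
    unfolding loc_int_def nn_integral_unit_int_indicator[OF assms(1)] by simp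
qed

theorem theorem3p10:
  fixes p q \<theta> :: real and E :: "real set"
  assumes "1 \<le> p" and "1 \<le> q" and "0 < \<theta>"
    and "E \<in> sets lebesgue" and "bounded E"
  shows "(indicator E :: real \<Rightarrow> complex) \<in> grand_space p q \<theta> \<and>
         (indicator E :: real \<Rightarrow> complex) \<in> small_space p q \<theta> \<and>
         (\<exists>c::real. c > 0 \<and> (\<forall>g\<in>grand_space p q \<theta>.
           (\<integral>\<^sup>+ x\<in>E. ennreal (norm (g x)) \<partial>lebesgue) \<le> ennreal c * grand_norm p q \<theta> g))"
proof (intro conjI)
  define K where "K = floor ` E"
  have "finite K"
    unfolding K_def using assms(5) by (rule finite_floor_image_bounded)
  note support = loc_int_indicator_outside[OF assms(4), folded K_def]
  have "grand_norm p q \<theta> (indicator E) \<le> ennreal (exp \<theta> * (1 + card K))"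
    using assms \<open>finite K\<close> support loc_int_indicator_le_1
    by (intro grand_norm_le_card_support) auto
  then show "(indicator E :: real \<Rightarrow> complex) \<in> grand_space p q \<theta>"
    unfolding grand_space_def using loc_Lp_indicator[OF assms(4)] by (simp add: le_less_trans)
  show "(indicator E :: real \<Rightarrow> complex) \<in> small_space p q \<theta>"
    unfolding small_space_def
    using loc_Lp_indicator[OF assms(4)] small_norm_finite_support[OF \<open>finite K\<close> support] by simp
  have "(\<integral>\<^sup>+ x\<in>E. ennreal (norm (g x)) \<partial>lebesgue) \<le> ennreal (2 * real (card K) + 1) * grand_norm p q \<theta> g"
    if "g \<in> grand_space p q \<theta>" for g
  proof -
    have "(\<integral>\<^sup>+ x\<in>E. ennreal (norm (g x)) \<partial>lebesgue) \<le> ennreal (2 * card K) * grand_norm p q \<theta> g"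
      using assms(1,2) that \<open>finite K\<close> by (rule nn_integral_le_grand_norm) (simp add: K_def)
    also have "\<dots> \<le> ennreal (2 * real (card K) + 1) * grand_norm p q \<theta> g"
      by (intro mult_right_mono ennreal_leI) simp_all
    finally show ?thesis .
  qed
  then show "\<exists>c::real. c > 0 \<and> (\<forall>g\<in>grand_space p q \<theta>.
      (\<integral>\<^sup>+ x\<in>E. ennreal (norm (g x)) \<partial>lebesgue) \<le> ennreal c * grand_norm p q \<theta> g)"
    by (intro exI[of _ "2 * real (card K) + 1"]) auto
qed

end
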